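(* Let $M$ and $N$ be conical monoids, $I$ an order-ideal of $M$, and $\varphi\colon I\to\varphi(I)$ a monoid isomorphism onto an order-ideal $\varphi(I)$ of $N$. Let $P=(M\times N)/\!\sim$, where $\sim$ is the monoid congruence on $M\times N$ generated by the pairs $((s,0),(0,\varphi(s)))$, $s\in I$, and define $\iota_1\colon M\to P$, $\iota_1(x)=[(x,0)]$, and $\iota_2\colon N\to P$, $\iota_2(y)=[(0,y)]$. Then: (1) $\iota_1,\iota_2$ form a pushout of the diagram $M\hookleftarrow I\xrightarrow{\varphi}N$ in the category of monoids; (2) $\iota_1$ and $\iota_2$ are injective; (3) $I'=\iota_1(I)=\iota_2(\varphi(I))$ is an order-ideal of $P$ and $P/I'\cong M/I\times N/\varphi(I)$; (4) if $Q$ is a conical refinement monoid and $\theta_1\colon M\to Q$, $\theta_2\colon N\to Q$ are injective monoid homomorphisms with $\theta_1|_I=\theta_2\circ\varphi$, $\theta_1(M)\cap\theta_2(N)=\theta_1(I)=\theta_2(\varphi(I))$, and $\theta_1(M),\theta_2(N)$ order-ideals of $Q$, then there is an injective monoid homomorphism $\iota\colon P\to Q$ with $\theta_i=\iota\circ\iota_i$ for $i=1,2$.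
   Context: Monoids are abelian. A monoid is conical if $x+y=0$ implies $x=y=0$. An order-ideal of $M$ is a nonempty $I\subseteq M$ with $x+y\in I\iff x,y\in I$. For an order-ideal $I$, $M/I$ is the quotient by the congruence $x\equiv y\iff x+u=y+v$ for some $u,v\in I$. A refinement monoid is one in which every $x_1+x_2=y_1+y_2$ admits $x_{ij}$ with $x_i=x_{i1}+x_{i2}$, $y_j=x_{1j}+x_{2j}$. *)

theory Defs
  imports "HOL-Algebra.Group"
begin

text \<open>All monoids are commutative monoids in the sense of HOL-Algebra (written multiplicatively:
  the paper's x+y is x \<otimes> y and 0 is \<one>).\<close>

definition conical :: "('a, 'm) monoid_scheme \<Rightarrow> bool" where
  "conical G \<longleftrightarrow> (\<forall>x\<in>carrier G. \<forall>y\<in>carrier G. x \<otimes>\<^bsub>G\<^esub> y = \<one>\<^bsub>G\<^esub> \<longrightarrow> x = \<one>\<^bsub>G\<^esub> \<and> y = \<one>\<^bsub>G\<^esub>)"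

definition order_ideal :: "('a, 'm) monoid_scheme \<Rightarrow> 'a set \<Rightarrow> bool" where
  "order_ideal G I \<longleftrightarrow> I \<subseteq> carrier G \<and> I \<noteq> {} \<and>
     (\<forall>x\<in>carrier G. \<forall>y\<in>carrier G. x \<otimes>\<^bsub>G\<^esub> y \<in> I \<longleftrightarrow> x \<in> I \<and> y \<in> I)"

definition refinement_monoid :: "('a, 'm) monoid_scheme \<Rightarrow> bool" where
  "refinement_monoid G \<longleftrightarrow>
     (\<forall>x1\<in>carrier G. \<forall>x2\<in>carrier G. \<forall>y1\<in>carrier G. \<forall>y2\<in>carrier G.
        x1 \<otimes>\<^bsub>G\<^esub> x2 = y1 \<otimes>\<^bsub>G\<^esub> y2 \<longrightarrow>
        (\<exists>x11\<in>carrier G. \<exists>x12\<in>carrier G. \<exists>x21\<in>carrier G. \<exists>x22\<in>carrier G.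
           x1 = x11 \<otimes>\<^bsub>G\<^esub> x12 \<and> x2 = x21 \<otimes>\<^bsub>G\<^esub> x22 \<and>
           y1 = x11 \<otimes>\<^bsub>G\<^esub> x21 \<and> y2 = x12 \<otimes>\<^bsub>G\<^esub> x22))"

definition monoid_congruence :: "('a, 'm) monoid_scheme \<Rightarrow> ('a \<times> 'a) set \<Rightarrow> bool" where
  "monoid_congruence G R \<longleftrightarrow> equiv (carrier G) R \<and>
     (\<forall>a b c d. (a, b) \<in> R \<longrightarrow> (c, d) \<in> R \<longrightarrow> (a \<otimes>\<^bsub>G\<^esub> c, b \<otimes>\<^bsub>G\<^esub> d) \<in> R)"

definition generated_congruence :: "('a, 'm) monoid_scheme \<Rightarrow> ('a \<times> 'a) set \<Rightarrow> ('a \<times> 'a) set" where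
  "generated_congruence G S = \<Inter>{R. monoid_congruence G R \<and> S \<subseteq> R}"

definition quotient_monoid :: "('a, 'm) monoid_scheme \<Rightarrow> ('a \<times> 'a) set \<Rightarrow> 'a set monoid" where
  "quotient_monoid G R =
     \<lparr>carrier = carrier G // R,
      mult = (\<lambda>A B. \<Union>a\<in>A. \<Union>b\<in>B. R `` {a \<otimes>\<^bsub>G\<^esub> b}),
      one = R `` {\<one>\<^bsub>G\<^esub>}\<rparr>"

definition ideal_congruence :: "('a, 'm) monoid_scheme \<Rightarrow> 'a set \<Rightarrow> ('a \<times> 'a) set" where
  "ideal_congruence G I = {(x, y). x \<in> carrier G \<and> y \<in> carrier G \<and>
      (\<exists>u\<in>I. \<exists>v\<in>I. x \<otimes>\<^bsub>G\<^esub> u = y \<otimes>\<^bsub>G\<^esub> v)}"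

definition quotient_by_ideal :: "('a, 'm) monoid_scheme \<Rightarrow> 'a set \<Rightarrow> 'a set monoid" where
  "quotient_by_ideal G I = quotient_monoid G (ideal_congruence G I)"

definition pushout_congruence ::
  "'a monoid \<Rightarrow> 'b monoid \<Rightarrow> 'a set \<Rightarrow> ('a \<Rightarrow> 'b) \<Rightarrow> (('a \<times> 'b) \<times> ('a \<times> 'b)) set" where
  "pushout_congruence M N I \<phi> =
     generated_congruence (M \<times>\<times> N) {((s, \<one>\<^bsub>N\<^esub>), (\<one>\<^bsub>M\<^esub>, \<phi> s)) | s. s \<in> I}"

definition pushout_monoid :: "'a monoid \<Rightarrow> 'b monoid \<Rightarrow> 'a set \<Rightarrow> ('a \<Rightarrow> 'b) \<Rightarrow> ('a \<times> 'b) set monoid" where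
  "pushout_monoid M N I \<phi> = quotient_monoid (M \<times>\<times> N) (pushout_congruence M N I \<phi>)"

definition iota1 :: "'a monoid \<Rightarrow> 'b monoid \<Rightarrow> 'a set \<Rightarrow> ('a \<Rightarrow> 'b) \<Rightarrow> 'a \<Rightarrow> ('a \<times> 'b) set" where
  "iota1 M N I \<phi> x = pushout_congruence M N I \<phi> `` {(x, \<one>\<^bsub>N\<^esub>)}"

definition iota2 :: "'a monoid \<Rightarrow> 'b monoid \<Rightarrow> 'a set \<Rightarrow> ('a \<Rightarrow> 'b) \<Rightarrow> 'b \<Rightarrow> ('a \<times> 'b) set" where
  "iota2 M N I \<phi> y = pushout_congruence M N I \<phi> `` {(\<one>\<^bsub>M\<^esub>, y)}"

end

theory Submission
  imports Defs
begin

text \<open>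
  Every statement about P is obtained by mapping P somewhere: since R is the least congruence
  containing the generators, a homomorphism on M \<times> N whose kernel contains the generators
  factors through P.  This gives the universal property (1); uniqueness holds since P is
  generated by the two images.  Injectivity (2) follows by mapping into M (resp. N) with an
  absorbing element adjoined, using \<phi>\<inverse> on J (resp. \<phi> on I) and the order-ideal property.
  For (3), the canonical map q : P \<rightarrow> M/I \<times> N/J supplied by (1) detects membership in
  I' = \<iota>1(I) and has exactly the congruence of I' as its kernel, so the first isomorphism
  theorem applies.  For (4), the map P \<rightarrow> Q induced by \<theta>1, \<theta>2 is injective by a refinement
  argument in Q.
\<close>

section \<open>Monoid congruences and quotient monoids\<close>

lemma monoid_congruenceI:
  fixes G (structure)
  assumes closed: "\<And>x y. x \<in> carrier G \<Longrightarrow> y \<in> carrier G \<Longrightarrow> x \<otimes> y \<in> carrier G"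
    and refl: "\<And>x. x \<in> carrier G \<Longrightarrow> Q x x"
    and sym: "\<And>x y. x \<in> carrier G \<Longrightarrow> y \<in> carrier G \<Longrightarrow> Q x y \<Longrightarrow> Q y x"
    and trans: "\<And>x y z. x \<in> carrier G \<Longrightarrow> y \<in> carrier G \<Longrightarrow> z \<in> carrier G \<Longrightarrow>
                   Q x y \<Longrightarrow> Q y z \<Longrightarrow> Q x z"
    and compat: "\<And>a b c d. a \<in> carrier G \<Longrightarrow> b \<in> carrier G \<Longrightarrow> c \<in> carrier G \<Longrightarrow> d \<in> carrier G
                   \<Longrightarrow> Q a b \<Longrightarrow> Q c d \<Longrightarrow> Q (a \<otimes> c) (b \<otimes> d)"
  shows "monoid_congruence G {(x, y). x \<in> carrier G \<and> y \<in> carrier G \<and> Q x y}"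
  unfolding monoid_congruence_def equiv_def
proof (intro conjI allI impI)
  show "refl_on (carrier G) {(x, y). x \<in> carrier G \<and> y \<in> carrier G \<and> Q x y}"
    unfolding refl_on_def using refl by blast
  show "sym {(x, y). x \<in> carrier G \<and> y \<in> carrier G \<and> Q x y}"
    unfolding sym_def using sym by blast
  show "trans {(x, y). x \<in> carrier G \<and> y \<in> carrier G \<and> Q x y}"
    unfolding trans_def using trans by blast
  fix a b c d
  assume "(a, b) \<in> {(x, y). x \<in> carrier G \<and> y \<in> carrier G \<and> Q x y}"
    and "(c, d) \<in> {(x, y). x \<in> carrier G \<and> y \<in> carrier G \<and> Q x y}"
  then show "(a \<otimes> c, b \<otimes> d) \<in> {(x, y). x \<in> carrier G \<and> y \<in> carrier G \<and> Q x y}"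
    using compat closed by blast
qed blast

lemma kernel_congruence:
  assumes "monoid G" and "h \<in> hom G T"
  shows "monoid_congruence G {(x, y). x \<in> carrier G \<and> y \<in> carrier G \<and> h x = h y}"
proof -
  interpret monoid G by fact
  show ?thesis
    by (rule monoid_congruenceI) (auto simp: hom_mult[OF assms(2)])
qed

lemma generated_congruence_is_congruence:
  fixes G (structure)
  assumes "monoid G" and "S \<subseteq> carrier G \<times> carrier G"
  shows "monoid_congruence G (generated_congruence G S)"
proof -
  interpret monoid G by fact
  let ?F = "{R. monoid_congruence G R \<and> S \<subseteq> R}"
  have "monoid_congruence G (carrier G \<times> carrier G)"
    unfolding monoid_congruence_def equiv_def refl_on_def sym_def trans_def by auto
  then have "carrier G \<times> carrier G \<in> ?F" using assms(2) by blast
  then have sub: "generated_congruence G S \<subseteq> carrier G \<times> carrier G"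
    unfolding generated_congruence_def by blast
  have equivs: "\<And>R. R \<in> ?F \<Longrightarrow> refl_on (carrier G) R \<and> sym R \<and> trans R"
    unfolding monoid_congruence_def equiv_def by blast
  show ?thesis
    unfolding monoid_congruence_def equiv_def
  proof (intro conjI allI impI)
    show "refl_on (carrier G) (generated_congruence G S)"
      using sub equivs unfolding refl_on_def generated_congruence_def by blast
    show "sym (generated_congruence G S)"
      using equivs unfolding sym_def generated_congruence_def by blast
    show "trans (generated_congruence G S)"
      using equivs unfolding trans_def generated_congruence_def by (meson Inter_iff)
    fix a b c d
    assume "(a, b) \<in> generated_congruence G S" "(c, d) \<in> generated_congruence G S"
    then show "(a \<otimes> c, b \<otimes> d) \<in> generated_congruence G S"
      unfolding generated_congruence_def monoid_congruence_def by blast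
  qed (rule sub)
qed

lemma generated_congruence_contains: "S \<subseteq> generated_congruence G S"
  unfolding generated_congruence_def by blast

lemma generated_congruence_least:
  "monoid_congruence G R \<Longrightarrow> S \<subseteq> R \<Longrightarrow> generated_congruence G S \<subseteq> R"
  unfolding generated_congruence_def by blast

lemma quotient_carrier: "carrier (quotient_monoid G R) = carrier G // R"
  and quotient_one: "\<one>\<^bsub>quotient_monoid G R\<^esub> = R``{\<one>\<^bsub>G\<^esub>}"
  by (simp_all add: quotient_monoid_def)

lemma quotient_mult:
  fixes G (structure)
  assumes R: "monoid_congruence G R" and "a \<in> carrier G" "b \<in> carrier G"
  shows "R``{a} \<otimes>\<^bsub>quotient_monoid G R\<^esub> R``{b} = R``{a \<otimes> b}"
proof -
  have eq: "equiv (carrier G) R" using R unfolding monoid_congruence_def by blast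
  have same_class: "R``{a' \<otimes> b'} = R``{a \<otimes> b}" if "a' \<in> R``{a}" "b' \<in> R``{b}" for a' b'
  proof -
    have "(a \<otimes> b, a' \<otimes> b') \<in> R"
      using that R unfolding monoid_congruence_def by blast
    then show ?thesis using equiv_class_eq[OF eq] by metis
  qed
  have "a \<in> R``{a}" "b \<in> R``{b}" using equiv_class_self[OF eq] assms by auto
  then have "(\<Union>a'\<in>R``{a}. \<Union>b'\<in>R``{b}. R``{a' \<otimes> b'}) = R``{a \<otimes> b}"
    using same_class by blast
  then show ?thesis unfolding quotient_monoid_def by simp
qed

lemma quotient_comm_monoid:
  fixes G (structure)
  assumes "comm_monoid G" and R: "monoid_congruence G R"
  shows "comm_monoid (quotient_monoid G R)"
proof -
  interpret comm_monoid G by fact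
  let ?Q = "quotient_monoid G R"
  note mult = quotient_mult[OF R]
  show ?thesis
  proof (rule comm_monoidI)
    fix X Y assume "X \<in> carrier ?Q" "Y \<in> carrier ?Q"
    then obtain a b where "X = R``{a}" "Y = R``{b}" "a \<in> carrier G" "b \<in> carrier G"
      by (auto simp: quotient_carrier elim!: quotientE)
    then show "X \<otimes>\<^bsub>?Q\<^esub> Y \<in> carrier ?Q" and "X \<otimes>\<^bsub>?Q\<^esub> Y = Y \<otimes>\<^bsub>?Q\<^esub> X"
      by (auto simp: mult quotient_carrier quotientI m_comm)
  next
    show "\<one>\<^bsub>?Q\<^esub> \<in> carrier ?Q" by (simp add: quotient_one quotient_carrier quotientI)
  next
    fix X Y Z assume "X \<in> carrier ?Q" "Y \<in> carrier ?Q" "Z \<in> carrier ?Q"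
    then obtain a b c where "X = R``{a}" "Y = R``{b}" "Z = R``{c}"
      and "a \<in> carrier G" "b \<in> carrier G" "c \<in> carrier G"
      by (auto simp: quotient_carrier elim!: quotientE)
    then show "X \<otimes>\<^bsub>?Q\<^esub> Y \<otimes>\<^bsub>?Q\<^esub> Z = X \<otimes>\<^bsub>?Q\<^esub> (Y \<otimes>\<^bsub>?Q\<^esub> Z)"
      by (simp add: mult m_assoc)
  next
    fix X assume "X \<in> carrier ?Q"
    then obtain a where "X = R``{a}" "a \<in> carrier G"
      by (auto simp: quotient_carrier elim!: quotientE)
    then show "\<one>\<^bsub>?Q\<^esub> \<otimes>\<^bsub>?Q\<^esub> X = X" by (simp add: mult quotient_one)
  qed
qed

definition quotient_lift :: "('a \<times> 'a) set \<Rightarrow> ('a \<Rightarrow> 'c) \<Rightarrow> 'a set \<Rightarrow> 'c" where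
  "quotient_lift R h X = h (SOME x. x \<in> X)"

lemma quotient_lift_class:
  assumes "equiv A R" "x \<in> A" and resp: "\<And>x y. (x, y) \<in> R \<Longrightarrow> h x = h y"
  shows "quotient_lift R h (R``{x}) = h x"
proof -
  have "x \<in> R``{x}" using equiv_class_self[OF assms(1,2)] .
  then have "(x, SOME y. y \<in> R``{x}) \<in> R" by (metis someI Image_singleton_iff)
  then show ?thesis using resp by (simp add: quotient_lift_def)
qed

lemma quotient_lift_hom:
  fixes G (structure)
  assumes "monoid G" and R: "monoid_congruence G R" and h: "h \<in> hom G T"
    and resp: "\<And>x y. (x, y) \<in> R \<Longrightarrow> h x = h y"
  shows "quotient_lift R h \<in> hom (quotient_monoid G R) T"
proof -
  have eq: "equiv (carrier G) R" using R unfolding monoid_congruence_def by blast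
  note lift = quotient_lift_class[OF eq _ resp]
  show ?thesis
  proof (rule homI)
    fix X assume "X \<in> carrier (quotient_monoid G R)"
    then obtain a where "a \<in> carrier G" "X = R``{a}"
      by (auto simp: quotient_carrier elim!: quotientE)
    then show "quotient_lift R h X \<in> carrier T" by (simp add: lift hom_in_carrier[OF h])
  next
    fix X Y assume "X \<in> carrier (quotient_monoid G R)" "Y \<in> carrier (quotient_monoid G R)"
    then obtain a b where "a \<in> carrier G" "b \<in> carrier G" "X = R``{a}" "Y = R``{b}"
      by (auto simp: quotient_carrier elim!: quotientE)
    then show "quotient_lift R h (X \<otimes>\<^bsub>quotient_monoid G R\<^esub> Y) =
        quotient_lift R h X \<otimes>\<^bsub>T\<^esub> quotient_lift R h Y"
      by (simp add: quotient_mult[OF R] lift monoid.m_closed[OF assms(1)] hom_mult[OF h])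
  qed
qed

lemma quotient_iso_by_kernel:
  fixes G (structure)
  assumes "monoid G" and R: "monoid_congruence G R" and h: "h \<in> hom G T"
    and surj: "h ` carrier G = carrier T"
    and ker: "\<And>x y. x \<in> carrier G \<Longrightarrow> y \<in> carrier G \<Longrightarrow> (x, y) \<in> R \<longleftrightarrow> h x = h y"
  shows "quotient_monoid G R \<cong> T"
proof -
  have eq: "equiv (carrier G) R" using R unfolding monoid_congruence_def by blast
  have resp: "\<And>x y. (x, y) \<in> R \<Longrightarrow> h x = h y"
    using ker eq unfolding equiv_def refl_on_def by blast
  note lift = quotient_lift_class[OF eq _ resp]
  have classes: "carrier (quotient_monoid G R) = (\<lambda>x. R``{x}) ` carrier G"
    unfolding quotient_carrier quotient_def by blast
  have "inj_on (quotient_lift R h) (carrier (quotient_monoid G R))"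
  proof (rule inj_onI)
    fix X Y assume "X \<in> carrier (quotient_monoid G R)" "Y \<in> carrier (quotient_monoid G R)"
      and lifts: "quotient_lift R h X = quotient_lift R h Y"
    then obtain a b where ab: "a \<in> carrier G" "b \<in> carrier G" "X = R``{a}" "Y = R``{b}"
      unfolding classes by blast
    have "h a = h b" using lifts lift ab by simp
    then have "(a, b) \<in> R" using ker ab(1,2) by blast
    then show "X = Y" using ab(3,4) equiv_class_eq[OF eq] by blast
  qed
  moreover have "quotient_lift R h ` carrier (quotient_monoid G R) = carrier T"
  proof -
    have "quotient_lift R h ` carrier (quotient_monoid G R) = h ` carrier G"
      unfolding classes image_image using lift by (intro image_cong) simp_all
    then show ?thesis using surj by simp
  qed
  ultimately show ?thesis
    using quotient_lift_hom[OF assms(1) R h resp]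
    unfolding is_iso_def iso_def bij_betw_def by blast
qed

lemma comm_monoid_DirProd:
  assumes "comm_monoid G" "comm_monoid H"
  shows "comm_monoid (G \<times>\<times> H)"
  using DirProd_monoid[OF comm_monoid.axioms(1)[OF assms(1)] comm_monoid.axioms(1)[OF assms(2)]]
    assms
  unfolding comm_monoid_def comm_monoid_axioms_def by (auto simp: mult_DirProd')

section \<open>Order-ideals and the congruence they induce\<close>

lemma order_ideal_carrier: "order_ideal G I \<Longrightarrow> I \<subseteq> carrier G"
  and order_ideal_mult_iff:
    "order_ideal G I \<Longrightarrow> x \<in> carrier G \<Longrightarrow> y \<in> carrier G \<Longrightarrow>
       x \<otimes>\<^bsub>G\<^esub> y \<in> I \<longleftrightarrow> x \<in> I \<and> y \<in> I"
  unfolding order_ideal_def by blast+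

lemma order_ideal_mult:
  "order_ideal G I \<Longrightarrow> x \<in> I \<Longrightarrow> y \<in> I \<Longrightarrow> x \<otimes>\<^bsub>G\<^esub> y \<in> I"
  unfolding order_ideal_def by blast

lemma order_ideal_one:
  fixes G (structure)
  assumes "monoid G" and I: "order_ideal G I"
  shows "\<one> \<in> I"
proof -
  interpret monoid G by fact
  obtain s where s: "s \<in> I" using I unfolding order_ideal_def by blast
  then have "s \<in> carrier G" using order_ideal_carrier[OF I] by blast
  then show ?thesis using s order_ideal_mult_iff[OF I, of s \<one>] by simp
qed

lemma ideal_congruence_is_congruence:
  fixes G (structure)
  assumes "comm_monoid G" and I: "order_ideal G I"
  shows "monoid_congruence G (ideal_congruence G I)"
proof -
  interpret comm_monoid G by fact
  have Ic: "\<And>u. u \<in> I \<Longrightarrow> u \<in> carrier G" using order_ideal_carrier[OF I] by blast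
  note Imult = order_ideal_mult[OF I]
  have "monoid_congruence G
      {(x, y). x \<in> carrier G \<and> y \<in> carrier G \<and> (\<exists>u\<in>I. \<exists>v\<in>I. x \<otimes> u = y \<otimes> v)}"
  proof (rule monoid_congruenceI)
    show "\<exists>u\<in>I. \<exists>v\<in>I. x \<otimes> u = x \<otimes> v" for x
      using order_ideal_one[OF monoid_axioms I] by blast
    show "\<exists>u\<in>I. \<exists>v\<in>I. y \<otimes> u = x \<otimes> v" if "\<exists>u\<in>I. \<exists>v\<in>I. x \<otimes> u = y \<otimes> v" for x y
      using that by metis
    show "\<exists>u\<in>I. \<exists>v\<in>I. x \<otimes> u = z \<otimes> v"
      if xyz: "x \<in> carrier G" "y \<in> carrier G" "z \<in> carrier G"
        and rel: "\<exists>u\<in>I. \<exists>v\<in>I. x \<otimes> u = y \<otimes> v" "\<exists>u\<in>I. \<exists>v\<in>I. y \<otimes> u = z \<otimes> v" for x y z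
    proof -
      obtain u v u' v' where uv: "u \<in> I" "v \<in> I" "u' \<in> I" "v' \<in> I"
        and eq1: "x \<otimes> u = y \<otimes> v" and eq2: "y \<otimes> u' = z \<otimes> v'"
        using rel by blast
      have "x \<otimes> (u \<otimes> u') = (x \<otimes> u) \<otimes> u'" using xyz uv by (simp add: Ic m_assoc)
      also have "\<dots> = (y \<otimes> u') \<otimes> v" using xyz uv by (simp add: eq1 Ic m_ac)
      also have "\<dots> = z \<otimes> (v' \<otimes> v)" using xyz uv by (simp add: eq2 Ic m_ac)
      finally show ?thesis using uv Imult by blast
    qed
    show "\<exists>u\<in>I. \<exists>v\<in>I. a \<otimes> c \<otimes> u = b \<otimes> d \<otimes> v"
      if abcd: "a \<in> carrier G" "b \<in> carrier G" "c \<in> carrier G" "d \<in> carrier G"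
        and rel: "\<exists>u\<in>I. \<exists>v\<in>I. a \<otimes> u = b \<otimes> v" "\<exists>u\<in>I. \<exists>v\<in>I. c \<otimes> u = d \<otimes> v" for a b c d
    proof -
      obtain u v u' v' where uv: "u \<in> I" "v \<in> I" "u' \<in> I" "v' \<in> I"
        and eq1: "a \<otimes> u = b \<otimes> v" and eq2: "c \<otimes> u' = d \<otimes> v'"
        using rel by blast
      have "a \<otimes> c \<otimes> (u \<otimes> u') = (a \<otimes> u) \<otimes> (c \<otimes> u')" using abcd uv by (simp add: Ic m_ac)
      also have "\<dots> = b \<otimes> d \<otimes> (v \<otimes> v')" using abcd uv by (simp add: eq1 eq2 Ic m_ac)
      finally show ?thesis using uv Imult by blast
    qed
  qed simp
  then show ?thesis unfolding ideal_congruence_def .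
qed

lemma ideal_congruence_one_iff:
  fixes G (structure)
  assumes "monoid G" and I: "order_ideal G I" and x: "x \<in> carrier G"
  shows "(x, \<one>) \<in> ideal_congruence G I \<longleftrightarrow> x \<in> I"
proof
  interpret monoid G by fact
  assume "(x, \<one>) \<in> ideal_congruence G I"
  then obtain u v where uv: "u \<in> I" "v \<in> I" "x \<otimes> u = \<one> \<otimes> v"
    unfolding ideal_congruence_def by blast
  then have "x \<otimes> u \<in> I" using order_ideal_carrier[OF I] by auto
  then show "x \<in> I" using order_ideal_mult_iff[OF I] x uv(1) order_ideal_carrier[OF I] by blast
next
  interpret monoid G by fact
  assume "x \<in> I"
  then have "x \<otimes> \<one> = \<one> \<otimes> x" using x by simp
  then show "(x, \<one>) \<in> ideal_congruence G I"
    unfolding ideal_congruence_def using x \<open>x \<in> I\<close> order_ideal_one[OF assms(1) I] by blast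
qed

lemma ideal_class_one_iff:
  fixes G (structure)
  assumes "comm_monoid G" and I: "order_ideal G I" and x: "x \<in> carrier G"
  shows "ideal_congruence G I `` {x} = ideal_congruence G I `` {\<one>} \<longleftrightarrow> x \<in> I"
proof -
  have G: "monoid G" using assms(1) by (rule comm_monoid.axioms(1))
  have eqv: "equiv (carrier G) (ideal_congruence G I)"
    using ideal_congruence_is_congruence[OF assms(1) I] unfolding monoid_congruence_def by blast
  have "ideal_congruence G I `` {x} = ideal_congruence G I `` {\<one>} \<longleftrightarrow>
      (x, \<one>) \<in> ideal_congruence G I"
    by (rule eq_equiv_class_iff[OF eqv x monoid.one_closed[OF G]])
  then show ?thesis using ideal_congruence_one_iff[OF G I x] by simp
qed

section \<open>Adjoining an absorbing element\<close>

text \<open>G extended by a new absorbing element None.  Homomorphisms into this monoid are used to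
  detect injectivity of the pushout embeddings.\<close>

definition adjoin_zero :: "('a, 'm) monoid_scheme \<Rightarrow> 'a option monoid" where
  "adjoin_zero G =
     \<lparr>carrier = insert None (Some ` carrier G),
      mult = (\<lambda>x y. case (x, y) of (Some a, Some b) \<Rightarrow> Some (a \<otimes>\<^bsub>G\<^esub> b) | _ \<Rightarrow> None),
      one = Some \<one>\<^bsub>G\<^esub>\<rparr>"

lemma adjoin_zero_simps:
  "carrier (adjoin_zero G) = insert None (Some ` carrier G)"
  "Some a \<otimes>\<^bsub>adjoin_zero G\<^esub> Some b = Some (a \<otimes>\<^bsub>G\<^esub> b)"
  "None \<otimes>\<^bsub>adjoin_zero G\<^esub> y = None"
  "y \<otimes>\<^bsub>adjoin_zero G\<^esub> None = None"
  by (simp_all add: adjoin_zero_def split: option.split)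

lemma comm_monoid_adjoin_zero:
  assumes "comm_monoid G"
  shows "comm_monoid (adjoin_zero G)"
proof -
  interpret comm_monoid G by fact
  show ?thesis
    by (rule comm_monoidI)
      (auto simp: adjoin_zero_def m_ac split: option.split)
qed


section \<open>The pushout along an isomorphism of order-ideals\<close>

locale monoid_pushout =
  fixes M :: "'a monoid" and N :: "'b monoid" and I :: "'a set" and \<phi> :: "'a \<Rightarrow> 'b"
  assumes comm_M: "comm_monoid M" and comm_N: "comm_monoid N"
    and ideal_I: "order_ideal M I" and ideal_J: "order_ideal N (\<phi> ` I)"
    and iso_\<phi>: "\<phi> \<in> iso (M\<lparr>carrier := I\<rparr>) (N\<lparr>carrier := \<phi> ` I\<rparr>)"
begin

sublocale M: comm_monoid M by (rule comm_M)
sublocale N: comm_monoid N by (rule comm_N)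

abbreviation "J \<equiv> \<phi> ` I"
abbreviation "generators \<equiv> {((s, \<one>\<^bsub>N\<^esub>), (\<one>\<^bsub>M\<^esub>, \<phi> s)) | s. s \<in> I}"
abbreviation "R \<equiv> pushout_congruence M N I \<phi>"
abbreviation "P \<equiv> pushout_monoid M N I \<phi>"
abbreviation "\<iota>\<^sub>1 \<equiv> iota1 M N I \<phi>"
abbreviation "\<iota>\<^sub>2 \<equiv> iota2 M N I \<phi>"

lemma I_carrier: "s \<in> I \<Longrightarrow> s \<in> carrier M"
  and J_carrier: "t \<in> J \<Longrightarrow> t \<in> carrier N"
  using order_ideal_carrier[OF ideal_I] order_ideal_carrier[OF ideal_J] by blast+

lemma phi_mult: "s \<in> I \<Longrightarrow> t \<in> I \<Longrightarrow> \<phi> (s \<otimes>\<^bsub>M\<^esub> t) = \<phi> s \<otimes>\<^bsub>N\<^esub> \<phi> t"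
  using iso_\<phi> unfolding iso_def hom_def by auto

lemma phi_inj: "inj_on \<phi> I"
  using iso_\<phi> unfolding iso_def bij_betw_def by auto

lemma one_I: "\<one>\<^bsub>M\<^esub> \<in> I" and one_J: "\<one>\<^bsub>N\<^esub> \<in> J"
  using order_ideal_one[OF M.monoid_axioms ideal_I] order_ideal_one[OF N.monoid_axioms ideal_J] .

text \<open>HOL-Algebra homomorphisms need not preserve units, but \<phi> does: some t \<in> I has \<phi> t = 1,
  and then 1 = \<phi> t = \<phi> (1 t) = \<phi> 1 \<phi> t = \<phi> 1.\<close>

lemma phi_one: "\<phi> \<one>\<^bsub>M\<^esub> = \<one>\<^bsub>N\<^esub>"
proof -
  obtain t where t: "t \<in> I" "\<phi> t = \<one>\<^bsub>N\<^esub>" using one_J by auto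
  have "\<phi> t = \<phi> (\<one>\<^bsub>M\<^esub> \<otimes>\<^bsub>M\<^esub> t)" using t I_carrier by simp
  also have "\<dots> = \<phi> \<one>\<^bsub>M\<^esub>" using phi_mult[OF one_I t(1)] t one_I by (simp add: J_carrier)
  finally show ?thesis using t by simp
qed

lemma comm_MN: "comm_monoid (M \<times>\<times> N)"
  by (rule comm_monoid_DirProd[OF comm_M comm_N])

lemma monoid_MN: "monoid (M \<times>\<times> N)"
  using comm_MN by (rule comm_monoid.axioms(1))

lemma P_quotient: "P = quotient_monoid (M \<times>\<times> N) R"
  by (simp add: pushout_monoid_def)

lemma R_congruence: "monoid_congruence (M \<times>\<times> N) R"
  unfolding pushout_congruence_def
  by (rule generated_congruence_is_congruence[OF monoid_MN]) (auto simp: I_carrier J_carrier)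

lemma generators_in_R: "generators \<subseteq> R"
  unfolding pushout_congruence_def by (rule generated_congruence_contains)

lemma R_least: "monoid_congruence (M \<times>\<times> N) K \<Longrightarrow> generators \<subseteq> K \<Longrightarrow> R \<subseteq> K"
  unfolding pushout_congruence_def by (rule generated_congruence_least)

lemma equiv_R: "equiv (carrier M \<times> carrier N) R"
  using R_congruence unfolding monoid_congruence_def by simp

lemma comm_P: "comm_monoid P"
  unfolding P_quotient by (rule quotient_comm_monoid[OF comm_MN R_congruence])

lemma P_carrier: "carrier P = (carrier M \<times> carrier N) // R"
  by (simp add: P_quotient quotient_carrier)

lemma P_mult:
  "a \<in> carrier M \<Longrightarrow> b \<in> carrier N \<Longrightarrow> c \<in> carrier M \<Longrightarrow> d \<in> carrier N \<Longrightarrow>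
    R``{(a, b)} \<otimes>\<^bsub>P\<^esub> R``{(c, d)} = R``{(a \<otimes>\<^bsub>M\<^esub> c, b \<otimes>\<^bsub>N\<^esub> d)}"
  using quotient_mult[OF R_congruence, of "(a, b)" "(c, d)"] by (simp add: P_quotient)

lemma class_in_P: "a \<in> carrier M \<Longrightarrow> b \<in> carrier N \<Longrightarrow> R``{(a, b)} \<in> carrier P"
  by (simp add: P_carrier quotientI)

lemma R_class_eq: "(p, q) \<in> R \<Longrightarrow> R``{p} = R``{q}"
  using equiv_class_eq[OF equiv_R] .

lemma P_cases:
  assumes "A \<in> carrier P"
  obtains a b where "A = R``{(a, b)}" "a \<in> carrier M" "b \<in> carrier N"
  using assms unfolding P_carrier by (auto elim!: quotientE)

lemma R_shift:
  assumes "s \<in> I" "m \<in> carrier M" "n \<in> carrier N"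
  shows "((m \<otimes>\<^bsub>M\<^esub> s, n), (m, \<phi> s \<otimes>\<^bsub>N\<^esub> n)) \<in> R"
proof -
  have "((m, n), (m, n)) \<in> R" using equiv_R assms unfolding equiv_def refl_on_def by auto
  moreover have "((s, \<one>\<^bsub>N\<^esub>), (\<one>\<^bsub>M\<^esub>, \<phi> s)) \<in> R" using generators_in_R assms by blast
  ultimately have "((m, n) \<otimes>\<^bsub>M \<times>\<times> N\<^esub> (s, \<one>\<^bsub>N\<^esub>), (m, n) \<otimes>\<^bsub>M \<times>\<times> N\<^esub> (\<one>\<^bsub>M\<^esub>, \<phi> s)) \<in> R"
    using R_congruence unfolding monoid_congruence_def by blast
  then show ?thesis using assms by (simp add: I_carrier J_carrier N.m_comm)
qed

lemma iota1_class: "\<iota>\<^sub>1 x = R``{(x, \<one>\<^bsub>N\<^esub>)}"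
  and iota2_class: "\<iota>\<^sub>2 y = R``{(\<one>\<^bsub>M\<^esub>, y)}"
  by (simp_all add: iota1_def iota2_def)

lemma iota1_hom: "\<iota>\<^sub>1 \<in> hom M P"
  by (rule homI) (simp_all add: iota1_class class_in_P P_mult)

lemma iota2_hom: "\<iota>\<^sub>2 \<in> hom N P"
  by (rule homI) (simp_all add: iota2_class class_in_P P_mult)

lemma iota_glue: "s \<in> I \<Longrightarrow> \<iota>\<^sub>1 s = \<iota>\<^sub>2 (\<phi> s)"
  unfolding iota1_class iota2_class by (rule R_class_eq) (use generators_in_R in blast)

lemma P_generated:
  assumes "a \<in> carrier M" "b \<in> carrier N"
  shows "R``{(a, b)} = \<iota>\<^sub>1 a \<otimes>\<^bsub>P\<^esub> \<iota>\<^sub>2 b"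
  using assms by (simp add: iota1_class iota2_class P_mult)


text \<open>A homomorphism on M \<times> N identifying each generating pair is constant on R-classes, since
  its kernel is a congruence containing the generators; hence it factors through P.\<close>

lemma factor_through_P:
  assumes F_hom: "F \<in> hom (M \<times>\<times> N) T"
    and generators: "\<And>s. s \<in> I \<Longrightarrow> F (s, \<one>\<^bsub>N\<^esub>) = F (\<one>\<^bsub>M\<^esub>, \<phi> s)"
  shows "quotient_lift R F \<in> hom P T"
    and "\<And>p. p \<in> carrier M \<times> carrier N \<Longrightarrow> quotient_lift R F (R``{p}) = F p"
proof -
  let ?K = "{(p, q). p \<in> carrier (M \<times>\<times> N) \<and> q \<in> carrier (M \<times>\<times> N) \<and> F p = F q}"
  have "generators \<subseteq> ?K" using generators I_carrier J_carrier by auto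
  then have "R \<subseteq> ?K" using R_least kernel_congruence[OF monoid_MN F_hom] by blast
  then have F_resp: "F p = F q" if "(p, q) \<in> R" for p q using that by blast
  show "quotient_lift R F \<in> hom P T"
    unfolding P_quotient by (rule quotient_lift_hom[OF monoid_MN R_congruence F_hom F_resp])
  show "quotient_lift R F (R``{p}) = F p" if "p \<in> carrier M \<times> carrier N" for p
    using that by (rule quotient_lift_class[OF equiv_R _ F_resp])
qed

lemma pushout_lift:
  fixes T :: "('c, 'n) monoid_scheme"
  assumes "comm_monoid T" and f: "f \<in> hom M T" and g: "g \<in> hom N T"
    and agree: "\<And>s. s \<in> I \<Longrightarrow> f s = g (\<phi> s)"
  obtains h where "h \<in> hom P T"
    and "\<And>a b. a \<in> carrier M \<Longrightarrow> b \<in> carrier N \<Longrightarrow> h (R``{(a, b)}) = f a \<otimes>\<^bsub>T\<^esub> g b"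
    and "\<And>x. x \<in> carrier M \<Longrightarrow> h (\<iota>\<^sub>1 x) = f x"
    and "\<And>y. y \<in> carrier N \<Longrightarrow> h (\<iota>\<^sub>2 y) = g y"
proof -
  interpret T: comm_monoid T by fact
  define F where "F p = f (fst p) \<otimes>\<^bsub>T\<^esub> g (snd p)" for p
  have f_one: "f \<one>\<^bsub>M\<^esub> = g \<one>\<^bsub>N\<^esub>" using agree[OF one_I] phi_one by simp
  have F_left: "F (x, \<one>\<^bsub>N\<^esub>) = f x" if x: "x \<in> carrier M" for x
  proof -
    have "F (x, \<one>\<^bsub>N\<^esub>) = f x \<otimes>\<^bsub>T\<^esub> f \<one>\<^bsub>M\<^esub>" by (simp add: F_def f_one)
    also have "\<dots> = f (x \<otimes>\<^bsub>M\<^esub> \<one>\<^bsub>M\<^esub>)" using hom_mult[OF f x M.one_closed] by simp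
    finally show ?thesis using x by simp
  qed
  have F_right: "F (\<one>\<^bsub>M\<^esub>, y) = g y" if y: "y \<in> carrier N" for y
  proof -
    have "F (\<one>\<^bsub>M\<^esub>, y) = g \<one>\<^bsub>N\<^esub> \<otimes>\<^bsub>T\<^esub> g y" by (simp add: F_def f_one)
    also have "\<dots> = g (\<one>\<^bsub>N\<^esub> \<otimes>\<^bsub>N\<^esub> y)" using hom_mult[OF g N.one_closed y] by simp
    finally show ?thesis using y by simp
  qed
  have F_hom: "F \<in> hom (M \<times>\<times> N) T"
  proof (rule homI)
    fix p q assume "p \<in> carrier (M \<times>\<times> N)" "q \<in> carrier (M \<times>\<times> N)"
    then show "F (p \<otimes>\<^bsub>M \<times>\<times> N\<^esub> q) = F p \<otimes>\<^bsub>T\<^esub> F q"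
      using hom_in_carrier[OF f] hom_in_carrier[OF g]
      by (auto simp: F_def mult_DirProd' hom_mult[OF f] hom_mult[OF g] T.m_ac)
  qed (auto simp: F_def hom_in_carrier[OF f] hom_in_carrier[OF g])
  have F_generators: "F (s, \<one>\<^bsub>N\<^esub>) = F (\<one>\<^bsub>M\<^esub>, \<phi> s)" if "s \<in> I" for s
    using that F_left F_right agree I_carrier J_carrier by simp
  define h where "h = quotient_lift R F"
  have h_hom: "h \<in> hom P T"
    unfolding h_def by (rule factor_through_P(1)[OF F_hom]) (fact F_generators)
  have h_class: "h (R``{p}) = F p" if "p \<in> carrier M \<times> carrier N" for p
    unfolding h_def by (rule factor_through_P(2)[OF F_hom]) (fact F_generators, fact that)
  show thesis
  proof (rule that)
    show "h \<in> hom P T" by (rule h_hom)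
    show "h (R``{(a, b)}) = f a \<otimes>\<^bsub>T\<^esub> g b" if "a \<in> carrier M" "b \<in> carrier N" for a b
      using that by (simp add: h_class F_def)
    show "h (\<iota>\<^sub>1 x) = f x" if "x \<in> carrier M" for x
      using that by (simp add: iota1_class h_class F_left)
    show "h (\<iota>\<^sub>2 y) = g y" if "y \<in> carrier N" for y
      using that by (simp add: iota2_class h_class F_right)
  qed
qed

text \<open>Statement (1): P together with \<iota>1, \<iota>2 is the pushout.  Uniqueness holds because P is
  generated by the images of M and N.\<close>

lemma pushout_universal:
  fixes T :: "'c monoid"
  assumes "comm_monoid T" and f: "f \<in> hom M T" and g: "g \<in> hom N T"
    and agree: "\<forall>s\<in>I. f s = g (\<phi> s)"
  shows "\<exists>h\<in>hom P T. (\<forall>x\<in>carrier M. h (\<iota>\<^sub>1 x) = f x) \<and> (\<forall>y\<in>carrier N. h (\<iota>\<^sub>2 y) = g y) \<and>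
           (\<forall>h'\<in>hom P T. (\<forall>x\<in>carrier M. h' (\<iota>\<^sub>1 x) = f x) \<and> (\<forall>y\<in>carrier N. h' (\<iota>\<^sub>2 y) = g y)
               \<longrightarrow> (\<forall>p\<in>carrier P. h' p = h p))"
proof -
  obtain h where h: "h \<in> hom P T" and h_class: "\<And>a b. a \<in> carrier M \<Longrightarrow> b \<in> carrier N \<Longrightarrow>
      h (R``{(a, b)}) = f a \<otimes>\<^bsub>T\<^esub> g b"
    and h1: "\<And>x. x \<in> carrier M \<Longrightarrow> h (\<iota>\<^sub>1 x) = f x"
    and h2: "\<And>y. y \<in> carrier N \<Longrightarrow> h (\<iota>\<^sub>2 y) = g y"
    using pushout_lift[OF assms(1) f g] agree by metis
  have unique: "h' A = h A"
    if h': "h' \<in> hom P T" and h'1: "\<forall>x\<in>carrier M. h' (\<iota>\<^sub>1 x) = f x"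
      and h'2: "\<forall>y\<in>carrier N. h' (\<iota>\<^sub>2 y) = g y" and A: "A \<in> carrier P" for h' A
  proof -
    obtain a b where ab: "A = R``{(a, b)}" "a \<in> carrier M" "b \<in> carrier N" using A by (rule P_cases)
    then have "h' A = h' (\<iota>\<^sub>1 a) \<otimes>\<^bsub>T\<^esub> h' (\<iota>\<^sub>2 b)"
      using P_generated hom_mult[OF h'] hom_in_carrier[OF iota1_hom] hom_in_carrier[OF iota2_hom]
      by simp
    then show ?thesis using ab h'1 h'2 h_class by simp
  qed
  show ?thesis using h h1 h2 unique by blast
qed


text \<open>To separate points of \<iota>1(M), map M into M extended by an absorbing
  element via Some, and N by the inverse of \<phi> on J and to the absorbing element outside J;
  this is multiplicative because J is an order-ideal.\<close>

lemma iota1_inj: "inj_on \<iota>\<^sub>1 (carrier M)"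
proof -
  define \<psi> where "\<psi> = inv_into I \<phi>"
  have psi_phi: "\<psi> (\<phi> s) = s" if "s \<in> I" for s
    unfolding \<psi>_def by (rule inv_into_f_f[OF phi_inj that])
  have psi_mult: "\<psi> (b \<otimes>\<^bsub>N\<^esub> b') = \<psi> b \<otimes>\<^bsub>M\<^esub> \<psi> b'" if bb': "b \<in> J" "b' \<in> J" for b b'
  proof -
    obtain s t where st: "s \<in> I" "t \<in> I" "b = \<phi> s" "b' = \<phi> t" using bb' by blast
    then have "\<psi> (b \<otimes>\<^bsub>N\<^esub> b') = \<psi> (\<phi> (s \<otimes>\<^bsub>M\<^esub> t))" by (simp add: phi_mult)
    also have "\<dots> = s \<otimes>\<^bsub>M\<^esub> t" by (rule psi_phi[OF order_ideal_mult[OF ideal_I st(1,2)]])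
    finally show ?thesis using st psi_phi by simp
  qed
  define g where "g b = (if b \<in> J then Some (\<psi> b) else None)" for b
  have Some_hom: "Some \<in> hom M (adjoin_zero M)"
    by (rule homI) (simp_all add: adjoin_zero_simps)
  have g_hom: "g \<in> hom N (adjoin_zero M)"
  proof (rule homI)
    fix b b' assume "b \<in> carrier N" "b' \<in> carrier N"
    then have "b \<otimes>\<^bsub>N\<^esub> b' \<in> J \<longleftrightarrow> b \<in> J \<and> b' \<in> J" by (rule order_ideal_mult_iff[OF ideal_J])
    then show "g (b \<otimes>\<^bsub>N\<^esub> b') = g b \<otimes>\<^bsub>adjoin_zero M\<^esub> g b'"
      by (auto simp: g_def psi_mult adjoin_zero_simps)
  qed (auto simp: g_def adjoin_zero_simps psi_phi I_carrier)
  obtain h where "\<And>x. x \<in> carrier M \<Longrightarrow> h (\<iota>\<^sub>1 x) = Some x"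
    using pushout_lift[OF comm_monoid_adjoin_zero[OF comm_M] Some_hom g_hom] psi_phi
    by (metis g_def imageI)
  then show ?thesis by (metis inj_onI option.inject)
qed

text \<open>Symmetrically, \<iota>2 is injective, using \<phi> on I and the absorbing element outside I.\<close>

lemma iota2_inj: "inj_on \<iota>\<^sub>2 (carrier N)"
proof -
  define f where "f a = (if a \<in> I then Some (\<phi> a) else None)" for a
  have Some_hom: "Some \<in> hom N (adjoin_zero N)"
    by (rule homI) (simp_all add: adjoin_zero_simps)
  have f_hom: "f \<in> hom M (adjoin_zero N)"
  proof (rule homI)
    fix a a' assume "a \<in> carrier M" "a' \<in> carrier M"
    then have "a \<otimes>\<^bsub>M\<^esub> a' \<in> I \<longleftrightarrow> a \<in> I \<and> a' \<in> I" by (rule order_ideal_mult_iff[OF ideal_I])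
    then show "f (a \<otimes>\<^bsub>M\<^esub> a') = f a \<otimes>\<^bsub>adjoin_zero N\<^esub> f a'"
      by (auto simp: f_def phi_mult adjoin_zero_simps)
  qed (auto simp: f_def adjoin_zero_simps J_carrier)
  obtain h where "\<And>y. y \<in> carrier N \<Longrightarrow> h (\<iota>\<^sub>2 y) = Some y"
    using pushout_lift[OF comm_monoid_adjoin_zero[OF comm_N] f_hom Some_hom]
    by (metis f_def)
  then show ?thesis by (metis inj_onI option.inject)
qed


abbreviation "I' \<equiv> \<iota>\<^sub>1 ` I"
abbreviation "EM \<equiv> ideal_congruence M I"
abbreviation "EN \<equiv> ideal_congruence N J"

lemma EM_congruence: "monoid_congruence M EM"
  and EN_congruence: "monoid_congruence N EN"
  using ideal_congruence_is_congruence[OF comm_M ideal_I]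
    ideal_congruence_is_congruence[OF comm_N ideal_J] .

lemma equiv_EM: "equiv (carrier M) EM" and equiv_EN: "equiv (carrier N) EN"
  using EM_congruence EN_congruence unfolding monoid_congruence_def by blast+

lemma comm_quotients: "comm_monoid (quotient_by_ideal M I \<times>\<times> quotient_by_ideal N J)"
  unfolding quotient_by_ideal_def
  by (intro comm_monoid_DirProd quotient_comm_monoid comm_M comm_N EM_congruence EN_congruence)

lemma quotients_carrier:
  "carrier (quotient_by_ideal M I \<times>\<times> quotient_by_ideal N J) = carrier M // EM \<times> carrier N // EN"
  by (simp add: quotient_by_ideal_def quotient_carrier)

text \<open>The canonical map P \<rightarrow> M/I \<times> N/J, [(a, b)] \<mapsto> ([a], [b]), obtained from the universal
  property; it is well defined because s \<in> I and \<phi> s \<in> J are both trivial modulo the ideals.\<close>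

lemma quotient_map:
  obtains q where "q \<in> hom P (quotient_by_ideal M I \<times>\<times> quotient_by_ideal N J)"
    and "\<And>a b. a \<in> carrier M \<Longrightarrow> b \<in> carrier N \<Longrightarrow> q (R``{(a, b)}) = (EM``{a}, EN``{b})"
proof -
  let ?T = "quotient_by_ideal M I \<times>\<times> quotient_by_ideal N J"
  define f where "f a = (EM``{a}, EN``{\<one>\<^bsub>N\<^esub>})" for a
  define g where "g b = (EM``{\<one>\<^bsub>M\<^esub>}, EN``{b})" for b
  note multM = quotient_mult[OF EM_congruence] and multN = quotient_mult[OF EN_congruence]
  have f_hom: "f \<in> hom M ?T"
    by (rule homI) (simp_all add: f_def quotient_carrier quotientI quotient_by_ideal_def multM multN)
  have g_hom: "g \<in> hom N ?T"
    by (rule homI) (simp_all add: g_def quotient_carrier quotientI quotient_by_ideal_def multM multN)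
  have "f s = g (\<phi> s)" if s: "s \<in> I" for s
  proof -
    have "EM``{s} = EM``{\<one>\<^bsub>M\<^esub>}" using ideal_class_one_iff[OF comm_M ideal_I] s I_carrier by simp
    moreover have "EN``{\<phi> s} = EN``{\<one>\<^bsub>N\<^esub>}"
      using ideal_class_one_iff[OF comm_N ideal_J] s J_carrier by simp
    ultimately show ?thesis by (simp add: f_def g_def)
  qed
  then obtain h where h: "h \<in> hom P ?T"
    and h_class: "\<And>a b. a \<in> carrier M \<Longrightarrow> b \<in> carrier N \<Longrightarrow> h (R``{(a, b)}) = f a \<otimes>\<^bsub>?T\<^esub> g b"
    using pushout_lift[OF comm_quotients f_hom g_hom] by metis
  show thesis
  proof (rule that[OF h])
    fix a b assume "a \<in> carrier M" "b \<in> carrier N"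
    then show "h (R``{(a, b)}) = (EM``{a}, EN``{b})"
      by (simp add: h_class f_def g_def quotient_by_ideal_def multM multN)
  qed
qed

lemma class_in_I'_iff:
  assumes ab: "a \<in> carrier M" "b \<in> carrier N"
  shows "R``{(a, b)} \<in> I' \<longleftrightarrow> a \<in> I \<and> b \<in> J"
proof
  assume "R``{(a, b)} \<in> I'"
  then obtain s where s: "s \<in> I" "R``{(a, b)} = R``{(s, \<one>\<^bsub>N\<^esub>)}" by (auto simp: iota1_class)
  obtain q where q: "\<And>a b. a \<in> carrier M \<Longrightarrow> b \<in> carrier N \<Longrightarrow> q (R``{(a, b)}) = (EM``{a}, EN``{b})"
    using quotient_map by metis
  have "(EM``{a}, EN``{b}) = (EM``{s}, EN``{\<one>\<^bsub>N\<^esub>})"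
    using q[OF ab] q[OF I_carrier[OF s(1)] N.one_closed] s(2) by simp
  also have "\<dots> = (EM``{\<one>\<^bsub>M\<^esub>}, EN``{\<one>\<^bsub>N\<^esub>})"
    using ideal_class_one_iff[OF comm_M ideal_I] s(1) I_carrier by simp
  finally show "a \<in> I \<and> b \<in> J"
    using ideal_class_one_iff[OF comm_M ideal_I] ideal_class_one_iff[OF comm_N ideal_J] ab by simp
next
  assume "a \<in> I \<and> b \<in> J"
  then obtain t where a: "a \<in> I" and t: "t \<in> I" "b = \<phi> t" by auto
  have "R``{(a, b)} = R``{(a \<otimes>\<^bsub>M\<^esub> t, \<one>\<^bsub>N\<^esub>)}"
    using R_class_eq[OF R_shift[OF t(1) ab(1) N.one_closed]] t J_carrier by simp
  then show "R``{(a, b)} \<in> I'"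
    using order_ideal_mult[OF ideal_I a t(1)] by (auto simp: iota1_class)
qed

lemma I'_eq: "I' = \<iota>\<^sub>2 ` J"
  using iota_glue by (auto simp: image_comp image_iff)

lemma order_ideal_I': "order_ideal P I'"
  unfolding order_ideal_def
proof (intro conjI ballI)
  show "I' \<subseteq> carrier P" using hom_in_carrier[OF iota1_hom] I_carrier by blast
  show "I' \<noteq> {}" using one_I by blast
  fix A B assume A: "A \<in> carrier P" and B: "B \<in> carrier P"
  obtain a b where ab: "A = R``{(a, b)}" "a \<in> carrier M" "b \<in> carrier N" using A by (rule P_cases)
  obtain c d where cd: "B = R``{(c, d)}" "c \<in> carrier M" "d \<in> carrier N" using B by (rule P_cases)
  have "A \<otimes>\<^bsub>P\<^esub> B \<in> I' \<longleftrightarrow> a \<otimes>\<^bsub>M\<^esub> c \<in> I \<and> b \<otimes>\<^bsub>N\<^esub> d \<in> J"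
    using ab cd by (simp add: P_mult class_in_I'_iff)
  also have "\<dots> \<longleftrightarrow> (a \<in> I \<and> b \<in> J) \<and> (c \<in> I \<and> d \<in> J)"
    using order_ideal_mult_iff[OF ideal_I ab(2) cd(2)] order_ideal_mult_iff[OF ideal_J ab(3) cd(3)]
    by blast
  also have "\<dots> \<longleftrightarrow> A \<in> I' \<and> B \<in> I'" using ab cd by (simp add: class_in_I'_iff)
  finally show "A \<otimes>\<^bsub>P\<^esub> B \<in> I' \<longleftrightarrow> A \<in> I' \<and> B \<in> I'" .
qed


lemma mult_I'_class:
  assumes "a \<in> carrier M" "b \<in> carrier N" "u \<in> I" "t \<in> I"
  shows "R``{(a, b)} \<otimes>\<^bsub>P\<^esub> \<iota>\<^sub>1 (u \<otimes>\<^bsub>M\<^esub> t) = R``{(a \<otimes>\<^bsub>M\<^esub> u, \<phi> t \<otimes>\<^bsub>N\<^esub> b)}"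
proof -
  have "R``{(a, b)} \<otimes>\<^bsub>P\<^esub> \<iota>\<^sub>1 (u \<otimes>\<^bsub>M\<^esub> t) = R``{((a \<otimes>\<^bsub>M\<^esub> u) \<otimes>\<^bsub>M\<^esub> t, b)}"
    using assms by (simp add: iota1_class P_mult I_carrier M.m_assoc)
  also have "\<dots> = R``{(a \<otimes>\<^bsub>M\<^esub> u, \<phi> t \<otimes>\<^bsub>N\<^esub> b)}"
    using R_class_eq[OF R_shift[OF assms(4) _ assms(2)]] assms by (simp add: I_carrier)
  finally show ?thesis .
qed

text \<open>Pairs congruent modulo I and J give classes congruent modulo I': multiplying by suitable
  elements \<iota>1(u t) of I' makes the two classes equal.\<close>

lemma classes_congruent_mod_I':
  assumes ab: "a \<in> carrier M" "b \<in> carrier N" and ab': "a' \<in> carrier M" "b' \<in> carrier N"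
    and EM: "(a, a') \<in> EM" and EN: "(b, b') \<in> EN"
  shows "(R``{(a, b)}, R``{(a', b')}) \<in> ideal_congruence P I'"
proof -
  obtain u v t t' where uv: "u \<in> I" "v \<in> I" "a \<otimes>\<^bsub>M\<^esub> u = a' \<otimes>\<^bsub>M\<^esub> v"
    and tt: "t \<in> I" "t' \<in> I" "b \<otimes>\<^bsub>N\<^esub> \<phi> t = b' \<otimes>\<^bsub>N\<^esub> \<phi> t'"
    using EM EN unfolding ideal_congruence_def by blast
  have shifted: "\<phi> t \<otimes>\<^bsub>N\<^esub> b = \<phi> t' \<otimes>\<^bsub>N\<^esub> b'"
    using tt ab(2) ab'(2) J_carrier by (simp add: N.m_comm)
  have "R``{(a, b)} \<otimes>\<^bsub>P\<^esub> \<iota>\<^sub>1 (u \<otimes>\<^bsub>M\<^esub> t) = R``{(a \<otimes>\<^bsub>M\<^esub> u, \<phi> t \<otimes>\<^bsub>N\<^esub> b)}"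
    using mult_I'_class[OF ab(1,2) uv(1) tt(1)] .
  also have "\<dots> = R``{(a' \<otimes>\<^bsub>M\<^esub> v, \<phi> t' \<otimes>\<^bsub>N\<^esub> b')}" using uv(3) shifted by simp
  also have "\<dots> = R``{(a', b')} \<otimes>\<^bsub>P\<^esub> \<iota>\<^sub>1 (v \<otimes>\<^bsub>M\<^esub> t')"
    using mult_I'_class[OF ab'(1,2) uv(2) tt(2)] by simp
  finally have "R``{(a, b)} \<otimes>\<^bsub>P\<^esub> \<iota>\<^sub>1 (u \<otimes>\<^bsub>M\<^esub> t) = R``{(a', b')} \<otimes>\<^bsub>P\<^esub> \<iota>\<^sub>1 (v \<otimes>\<^bsub>M\<^esub> t')" .
  moreover have "\<iota>\<^sub>1 (u \<otimes>\<^bsub>M\<^esub> t) \<in> I'" "\<iota>\<^sub>1 (v \<otimes>\<^bsub>M\<^esub> t') \<in> I'"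
    using uv tt order_ideal_mult[OF ideal_I] by blast+
  moreover have "R``{(a, b)} \<in> carrier P" "R``{(a', b')} \<in> carrier P"
    using class_in_P ab ab' by simp_all
  ultimately show ?thesis unfolding ideal_congruence_def by blast
qed

lemma kernel_quotient_map:
  assumes q: "q \<in> hom P (quotient_by_ideal M I \<times>\<times> quotient_by_ideal N J)"
    and q_class: "\<And>a b. a \<in> carrier M \<Longrightarrow> b \<in> carrier N \<Longrightarrow> q (R``{(a, b)}) = (EM``{a}, EN``{b})"
    and A: "A \<in> carrier P" and B: "B \<in> carrier P"
  shows "(A, B) \<in> ideal_congruence P I' \<longleftrightarrow> q A = q B"
proof
  let ?T = "quotient_by_ideal M I \<times>\<times> quotient_by_ideal N J"
  interpret T: comm_monoid ?T by (rule comm_quotients)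
  have q_I': "q U = \<one>\<^bsub>?T\<^esub>" if "U \<in> I'" for U
  proof -
    obtain s where s: "s \<in> I" "U = R``{(s, \<one>\<^bsub>N\<^esub>)}" using \<open>U \<in> I'\<close> by (auto simp: iota1_class)
    then have "q U = (EM``{s}, EN``{\<one>\<^bsub>N\<^esub>})" using q_class I_carrier by simp
    also have "EM``{s} = EM``{\<one>\<^bsub>M\<^esub>}" using ideal_class_one_iff[OF comm_M ideal_I] s I_carrier by simp
    finally show ?thesis by (simp add: quotient_by_ideal_def quotient_one)
  qed
  have absorb: "q (X \<otimes>\<^bsub>P\<^esub> U) = q X" if X: "X \<in> carrier P" and U: "U \<in> I'" for X U
  proof -
    have "U \<in> carrier P" using order_ideal_carrier[OF order_ideal_I'] U ..
    then have "q (X \<otimes>\<^bsub>P\<^esub> U) = q X \<otimes>\<^bsub>?T\<^esub> q U" by (rule hom_mult[OF q X])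
    then show ?thesis using q_I'[OF U] T.r_one[OF hom_in_carrier[OF q X]] by simp
  qed
  assume "(A, B) \<in> ideal_congruence P I'"
  then obtain U V where UV: "U \<in> I'" "V \<in> I'" "A \<otimes>\<^bsub>P\<^esub> U = B \<otimes>\<^bsub>P\<^esub> V"
    unfolding ideal_congruence_def by blast
  have "q A = q (A \<otimes>\<^bsub>P\<^esub> U)" using absorb[OF A UV(1)] by simp
  also have "\<dots> = q (B \<otimes>\<^bsub>P\<^esub> V)" using UV(3) by simp
  also have "\<dots> = q B" using absorb[OF B UV(2)] .
  finally show "q A = q B" .
next
  obtain a b where ab: "A = R``{(a, b)}" "a \<in> carrier M" "b \<in> carrier N" using A by (rule P_cases)
  obtain a' b' where ab': "B = R``{(a', b')}" "a' \<in> carrier M" "b' \<in> carrier N" using B by (rule P_cases)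
  assume "q A = q B"
  then have "EM``{a} = EM``{a'}" "EN``{b} = EN``{b'}" using ab ab' q_class by simp_all
  then have "(a, a') \<in> EM" "(b, b') \<in> EN"
    using eq_equiv_class_iff[OF equiv_EM ab(2) ab'(2)] eq_equiv_class_iff[OF equiv_EN ab(3) ab'(3)]
    by simp_all
  then show "(A, B) \<in> ideal_congruence P I'"
    using ab(1) ab'(1) classes_congruent_mod_I'[OF ab(2,3) ab'(2,3)] by simp
qed

lemma quotient_iso: "quotient_by_ideal P I' \<cong> quotient_by_ideal M I \<times>\<times> quotient_by_ideal N J"
proof -
  obtain q where q: "q \<in> hom P (quotient_by_ideal M I \<times>\<times> quotient_by_ideal N J)"
    and q_class: "\<And>a b. a \<in> carrier M \<Longrightarrow> b \<in> carrier N \<Longrightarrow> q (R``{(a, b)}) = (EM``{a}, EN``{b})"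
    using quotient_map by metis
  have "q ` carrier P = carrier (quotient_by_ideal M I \<times>\<times> quotient_by_ideal N J)"
  proof
    show "q ` carrier P \<subseteq> carrier (quotient_by_ideal M I \<times>\<times> quotient_by_ideal N J)"
      by (rule hom_carrier[OF q])
    show "carrier (quotient_by_ideal M I \<times>\<times> quotient_by_ideal N J) \<subseteq> q ` carrier P"
    proof
      fix z assume "z \<in> carrier (quotient_by_ideal M I \<times>\<times> quotient_by_ideal N J)"
      then obtain a b where "a \<in> carrier M" "b \<in> carrier N" "z = (EM``{a}, EN``{b})"
        unfolding quotients_carrier by (auto elim!: quotientE)
      then show "z \<in> q ` carrier P" using q_class class_in_P by (metis imageI)
    qed
  qed
  then show ?thesis
    unfolding quotient_by_ideal_def[of P]
    using quotient_iso_by_kernel[OF comm_monoid.axioms(1)[OF comm_P]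
        ideal_congruence_is_congruence[OF comm_P order_ideal_I'] q]
      kernel_quotient_map[OF q q_class] by blast
qed

end

section \<open>Embedding the pushout into a conical refinement monoid\<close>

locale pushout_embedding = monoid_pushout M N I \<phi>
  for M :: "'a monoid" and N :: "'b monoid" and I :: "'a set" and \<phi> :: "'a \<Rightarrow> 'b" +
  fixes Q :: "('d, 'e) monoid_scheme" and \<theta>\<^sub>1 :: "'a \<Rightarrow> 'd" and \<theta>\<^sub>2 :: "'b \<Rightarrow> 'd"
  assumes comm_Q: "comm_monoid Q" and refinement_Q: "refinement_monoid Q"
    and hom_\<theta>\<^sub>1: "\<theta>\<^sub>1 \<in> hom M Q" and hom_\<theta>\<^sub>2: "\<theta>\<^sub>2 \<in> hom N Q"
    and inj_\<theta>\<^sub>1: "inj_on \<theta>\<^sub>1 (carrier M)" and inj_\<theta>\<^sub>2: "inj_on \<theta>\<^sub>2 (carrier N)"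
    and glue_\<theta>: "\<forall>s\<in>I. \<theta>\<^sub>1 s = \<theta>\<^sub>2 (\<phi> s)"
    and images_meet: "\<theta>\<^sub>1 ` carrier M \<inter> \<theta>\<^sub>2 ` carrier N = \<theta>\<^sub>1 ` I"
    and ideal_\<theta>\<^sub>1: "order_ideal Q (\<theta>\<^sub>1 ` carrier M)" and ideal_\<theta>\<^sub>2: "order_ideal Q (\<theta>\<^sub>2 ` carrier N)"
begin

text \<open>The refinement entries lie in the
  images because these are order-ideals, and the off-diagonal entries lie in both images, hence
  in \<theta>1(I).\<close>

lemma refinement_decomposition:
  assumes ab: "a \<in> carrier M" "b \<in> carrier N" "a' \<in> carrier M" "b' \<in> carrier N"
    and eq: "\<theta>\<^sub>1 a \<otimes>\<^bsub>Q\<^esub> \<theta>\<^sub>2 b = \<theta>\<^sub>1 a' \<otimes>\<^bsub>Q\<^esub> \<theta>\<^sub>2 b'"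
  obtains m n s t where "m \<in> carrier M" "n \<in> carrier N" "s \<in> I" "t \<in> I"
    and "a = m \<otimes>\<^bsub>M\<^esub> s" "a' = m \<otimes>\<^bsub>M\<^esub> t" "b = \<phi> t \<otimes>\<^bsub>N\<^esub> n" "b' = \<phi> s \<otimes>\<^bsub>N\<^esub> n"
proof -
  have c1: "\<And>x. x \<in> carrier M \<Longrightarrow> \<theta>\<^sub>1 x \<in> carrier Q" using hom_\<theta>\<^sub>1 by (rule hom_in_carrier)
  have c2: "\<And>y. y \<in> carrier N \<Longrightarrow> \<theta>\<^sub>2 y \<in> carrier Q" using hom_\<theta>\<^sub>2 by (rule hom_in_carrier)
  obtain x11 x12 x21 x22 where x: "x11 \<in> carrier Q" "x12 \<in> carrier Q" "x21 \<in> carrier Q" "x22 \<in> carrier Q"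
    and rows: "\<theta>\<^sub>1 a = x11 \<otimes>\<^bsub>Q\<^esub> x12" "\<theta>\<^sub>2 b = x21 \<otimes>\<^bsub>Q\<^esub> x22"
    and cols: "\<theta>\<^sub>1 a' = x11 \<otimes>\<^bsub>Q\<^esub> x21" "\<theta>\<^sub>2 b' = x12 \<otimes>\<^bsub>Q\<^esub> x22"
    using refinement_Q[unfolded refinement_monoid_def, rule_format,
        OF c1[OF ab(1)] c2[OF ab(2)] c1[OF ab(3)] c2[OF ab(4)] eq]
    by blast
  note in1 = order_ideal_mult_iff[OF ideal_\<theta>\<^sub>1] and in2 = order_ideal_mult_iff[OF ideal_\<theta>\<^sub>2]
  have "x11 \<otimes>\<^bsub>Q\<^esub> x12 \<in> \<theta>\<^sub>1 ` carrier M" "x11 \<otimes>\<^bsub>Q\<^esub> x21 \<in> \<theta>\<^sub>1 ` carrier M"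
    "x21 \<otimes>\<^bsub>Q\<^esub> x22 \<in> \<theta>\<^sub>2 ` carrier N" "x12 \<otimes>\<^bsub>Q\<^esub> x22 \<in> \<theta>\<^sub>2 ` carrier N"
    using rows cols ab by (metis imageI)+
  then have images: "x11 \<in> \<theta>\<^sub>1 ` carrier M" "x12 \<in> \<theta>\<^sub>1 ` carrier M" "x21 \<in> \<theta>\<^sub>1 ` carrier M"
    "x12 \<in> \<theta>\<^sub>2 ` carrier N" "x21 \<in> \<theta>\<^sub>2 ` carrier N" "x22 \<in> \<theta>\<^sub>2 ` carrier N"
    using in1[OF x(1,2)] in1[OF x(1,3)] in2[OF x(3,4)] in2[OF x(2,4)] by blast+
  have "x12 \<in> \<theta>\<^sub>1 ` I" "x21 \<in> \<theta>\<^sub>1 ` I" using images images_meet by blast+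
  then obtain m n s t where mn: "m \<in> carrier M" "n \<in> carrier N" "s \<in> I" "t \<in> I"
    and x_eq: "x11 = \<theta>\<^sub>1 m" "x22 = \<theta>\<^sub>2 n" "x12 = \<theta>\<^sub>1 s" "x21 = \<theta>\<^sub>1 t"
    using images(1,6) by blast
  have s_t: "s \<in> carrier M" "t \<in> carrier M" "\<phi> s \<in> carrier N" "\<phi> t \<in> carrier N"
    using mn(3,4) I_carrier J_carrier by auto
  have "\<theta>\<^sub>1 a = \<theta>\<^sub>1 (m \<otimes>\<^bsub>M\<^esub> s)" "\<theta>\<^sub>1 a' = \<theta>\<^sub>1 (m \<otimes>\<^bsub>M\<^esub> t)"
    using rows(1) cols(1) x_eq mn s_t by (simp_all add: hom_mult[OF hom_\<theta>\<^sub>1])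
  then have "a = m \<otimes>\<^bsub>M\<^esub> s" "a' = m \<otimes>\<^bsub>M\<^esub> t"
    using inj_\<theta>\<^sub>1 ab mn s_t by (simp_all add: inj_on_def)
  moreover have "\<theta>\<^sub>2 b = \<theta>\<^sub>2 (\<phi> t \<otimes>\<^bsub>N\<^esub> n)" "\<theta>\<^sub>2 b' = \<theta>\<^sub>2 (\<phi> s \<otimes>\<^bsub>N\<^esub> n)"
    using rows(2) cols(2) x_eq mn s_t glue_\<theta> by (simp_all add: hom_mult[OF hom_\<theta>\<^sub>2])
  then have "b = \<phi> t \<otimes>\<^bsub>N\<^esub> n" "b' = \<phi> s \<otimes>\<^bsub>N\<^esub> n"
    using inj_\<theta>\<^sub>2 ab mn s_t by (simp_all add: inj_on_def)
  ultimately show thesis using that mn by blast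
qed

text \<open>Statement (4): the map P \<rightarrow> Q induced by \<theta>1, \<theta>2 is injective.  If two classes have
  the same image, the decomposition shows both are the class of (m s t, n).\<close>

lemma embedding:
  "\<exists>\<iota>\<in>hom P Q. inj_on \<iota> (carrier P) \<and>
     (\<forall>x\<in>carrier M. \<iota> (\<iota>\<^sub>1 x) = \<theta>\<^sub>1 x) \<and> (\<forall>y\<in>carrier N. \<iota> (\<iota>\<^sub>2 y) = \<theta>\<^sub>2 y)"
proof -
  obtain h where h: "h \<in> hom P Q"
    and h_class: "\<And>a b. a \<in> carrier M \<Longrightarrow> b \<in> carrier N \<Longrightarrow> h (R``{(a, b)}) = \<theta>\<^sub>1 a \<otimes>\<^bsub>Q\<^esub> \<theta>\<^sub>2 b"
    and h1: "\<And>x. x \<in> carrier M \<Longrightarrow> h (\<iota>\<^sub>1 x) = \<theta>\<^sub>1 x"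
    and h2: "\<And>y. y \<in> carrier N \<Longrightarrow> h (\<iota>\<^sub>2 y) = \<theta>\<^sub>2 y"
    using pushout_lift[OF comm_Q hom_\<theta>\<^sub>1 hom_\<theta>\<^sub>2] glue_\<theta> by metis
  have "inj_on h (carrier P)"
  proof (rule inj_onI)
    fix A B assume A: "A \<in> carrier P" and B: "B \<in> carrier P" and hAB: "h A = h B"
    obtain a b where ab: "A = R``{(a, b)}" "a \<in> carrier M" "b \<in> carrier N" using A by (rule P_cases)
    obtain a' b' where ab': "B = R``{(a', b')}" "a' \<in> carrier M" "b' \<in> carrier N" using B by (rule P_cases)
    have "\<theta>\<^sub>1 a \<otimes>\<^bsub>Q\<^esub> \<theta>\<^sub>2 b = \<theta>\<^sub>1 a' \<otimes>\<^bsub>Q\<^esub> \<theta>\<^sub>2 b'" using hAB ab ab' h_class by simp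
    then obtain m n s t where mn: "m \<in> carrier M" "n \<in> carrier N" "s \<in> I" "t \<in> I"
      and "a = m \<otimes>\<^bsub>M\<^esub> s" "a' = m \<otimes>\<^bsub>M\<^esub> t" "b = \<phi> t \<otimes>\<^bsub>N\<^esub> n" "b' = \<phi> s \<otimes>\<^bsub>N\<^esub> n"
      using refinement_decomposition ab(2,3) ab'(2,3) by metis
    then have "A = R``{((m \<otimes>\<^bsub>M\<^esub> s) \<otimes>\<^bsub>M\<^esub> t, n)}" "B = R``{((m \<otimes>\<^bsub>M\<^esub> t) \<otimes>\<^bsub>M\<^esub> s, n)}"
      using ab(1) ab'(1) R_class_eq[OF R_shift] I_carrier by (simp_all add: M.m_closed)
    then show "A = B" using mn I_carrier by (simp add: M.m_ac)
  qed
  then show ?thesis using h h1 h2 by blast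
qed

end

theorem mainTheorem8:
  fixes M :: "'a monoid" and N :: "'b monoid" and I :: "'a set" and \<phi> :: "'a \<Rightarrow> 'b"
  assumes "comm_monoid M" and "comm_monoid N"
    and "conical M" and "conical N"
    and "order_ideal M I" and "order_ideal N (\<phi> ` I)"
    and "\<phi> \<in> iso (M\<lparr>carrier := I\<rparr>) (N\<lparr>carrier := \<phi> ` I\<rparr>)"
  defines "P \<equiv> pushout_monoid M N I \<phi>"
    and "\<iota>\<^sub>1 \<equiv> iota1 M N I \<phi>" and "\<iota>\<^sub>2 \<equiv> iota2 M N I \<phi>"
  shows
    \<comment> \<open>(1) pushout\<close>
    "(comm_monoid P \<and> \<iota>\<^sub>1 \<in> hom M P \<and> \<iota>\<^sub>2 \<in> hom N P \<and> (\<forall>s\<in>I. \<iota>\<^sub>1 s = \<iota>\<^sub>2 (\<phi> s)) \<and>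
      (\<forall>(T :: 'c monoid) f g. comm_monoid T \<and> f \<in> hom M T \<and> g \<in> hom N T \<and>
          (\<forall>s\<in>I. f s = g (\<phi> s)) \<longrightarrow>
        (\<exists>h\<in>hom P T. (\<forall>x\<in>carrier M. h (\<iota>\<^sub>1 x) = f x) \<and> (\<forall>y\<in>carrier N. h (\<iota>\<^sub>2 y) = g y) \<and>
           (\<forall>h'\<in>hom P T. (\<forall>x\<in>carrier M. h' (\<iota>\<^sub>1 x) = f x) \<and> (\<forall>y\<in>carrier N. h' (\<iota>\<^sub>2 y) = g y)
               \<longrightarrow> (\<forall>p\<in>carrier P. h' p = h p)))))
     \<comment> \<open>(2) injectivity\<close>
     \<and> inj_on \<iota>\<^sub>1 (carrier M) \<and> inj_on \<iota>\<^sub>2 (carrier N)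
     \<comment> \<open>(3) the order-ideal I' and the quotient\<close>
     \<and> \<iota>\<^sub>1 ` I = \<iota>\<^sub>2 ` (\<phi> ` I) \<and> order_ideal P (\<iota>\<^sub>1 ` I)
     \<and> quotient_by_ideal P (\<iota>\<^sub>1 ` I) \<cong> (quotient_by_ideal M I \<times>\<times> quotient_by_ideal N (\<phi> ` I))
     \<comment> \<open>(4) embedding into conical refinement monoids\<close>
     \<and> (\<forall>(Q :: 'd monoid) \<theta>\<^sub>1 \<theta>\<^sub>2. comm_monoid Q \<and> conical Q \<and> refinement_monoid Q \<and>
          \<theta>\<^sub>1 \<in> hom M Q \<and> \<theta>\<^sub>2 \<in> hom N Q \<and> inj_on \<theta>\<^sub>1 (carrier M) \<and> inj_on \<theta>\<^sub>2 (carrier N) \<and>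
          (\<forall>s\<in>I. \<theta>\<^sub>1 s = \<theta>\<^sub>2 (\<phi> s)) \<and>
          \<theta>\<^sub>1 ` carrier M \<inter> \<theta>\<^sub>2 ` carrier N = \<theta>\<^sub>1 ` I \<and> \<theta>\<^sub>1 ` I = \<theta>\<^sub>2 ` (\<phi> ` I) \<and>
          order_ideal Q (\<theta>\<^sub>1 ` carrier M) \<and> order_ideal Q (\<theta>\<^sub>2 ` carrier N) \<longrightarrow>
        (\<exists>\<iota>\<in>hom P Q. inj_on \<iota> (carrier P) \<and>
           (\<forall>x\<in>carrier M. \<iota> (\<iota>\<^sub>1 x) = \<theta>\<^sub>1 x) \<and> (\<forall>y\<in>carrier N. \<iota> (\<iota>\<^sub>2 y) = \<theta>\<^sub>2 y)))"
proof -
  interpret monoid_pushout M N I \<phi>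
    unfolding monoid_pushout_def using assms by blast
  note embedding = pushout_embedding.embedding[OF
      pushout_embedding.intro[OF monoid_pushout_axioms pushout_embedding_axioms.intro]]
  show ?thesis
    unfolding P_def \<iota>\<^sub>1_def \<iota>\<^sub>2_def
    by (intro conjI allI impI ballI; (elim conjE)?;
        rule comm_P iota1_hom iota2_hom iota_glue pushout_universal iota1_inj iota2_inj
          I'_eq order_ideal_I' quotient_iso embedding; assumption)
qed

end
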